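(* Let $m>1$ be odd, let $\varphi:\mathbb{Z}_{2m}\to\{\pm1\}$ be a binary sequence, let $\phi$ be the binary $(2,m)$-array obtained from $\varphi$ by the rule below, and let $f(k)=\frac{1-\mathrm{i}}{2}(\phi(0,k)+\mathrm{i}\phi(1,k))$ for $k\in\mathbb{Z}_m$. Then $f$ is an OQS if and only if $\varphi$ is a GOBS of length $2m$. The rule ($a\in\{0,1\}$, $k$ an integer in $\{0,\ldots,m-1\}$, arguments of $\varphi$ modulo $2m$): if $m\equiv1\pmod 4$, $\phi(a,k)$ equals $\varphi(k+am)$, $(-1)^{1-a}\varphi(k+(1-a)m)$, $-\varphi(k+am)$, $(-1)^a\varphi(k+(1-a)m)$ according as $k\equiv 0,1,2,3\pmod 4$; if $m\equiv 3\pmod 4$, $\phi(a,k)$ equals $(-1)^a\varphi(k+am)$, $\varphi(k+(1-a)m)$, $(-1)^{1-a}\varphi(k+am)$, $-\varphi(k+(1-a)m)$ according as $k\equiv 0,1,2,3\pmod 4$.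
   Context: $\mathrm{i}=\sqrt{-1}$. For a finite abelian group $A$ and $\psi:A\to\mathbb{C}$, $R_\psi(x)=\sum_{b\in A}\psi(b)\overline{\psi(x+b)}$. A quaternary sequence $f:\mathbb{Z}_m\to\{\pm1,\pm\mathrm{i}\}$, $m$ odd, is an OQS if $|R_f(w)|=1$ for all $1\le w\le m-1$. For a binary sequence $\varphi:\mathbb{Z}_{2m}\to\{\pm1\}$, its expansion is $\varphi':\mathbb{Z}_{4m}\to\{\pm1\}$ with $\varphi'(x)=\varphi(x\bmod 2m)$ for $x\in\{0,\ldots,2m-1\}$ and $\varphi'(x)=-\varphi(x\bmod 2m)$ for $x\in\{2m,\ldots,4m-1\}$. $\varphi$ is a GOBS if $R_{\varphi'}(x)\in\{0,4,-4\}$ for all $x\in\mathbb{Z}_{4m}\setminus\{0,2m\}$ and exactly $2m$ elements $x\in\mathbb{Z}_{4m}$ satisfy $R_{\varphi'}(x)=0$. *)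

theory Defs
  imports Complex_Main
begin

text \<open>Sequences on Z_n are represented as functions on nat, only the values on
{0..<n} matter; indices are reduced modulo n.\<close>

definition autocorr :: "nat \<Rightarrow> (nat \<Rightarrow> complex) \<Rightarrow> nat \<Rightarrow> complex" where
  "autocorr n \<psi> x = (\<Sum>b<n. \<psi> b * cnj (\<psi> ((x + b) mod n)))"

definition quaternary_seq :: "nat \<Rightarrow> (nat \<Rightarrow> complex) \<Rightarrow> bool" where
  "quaternary_seq m f \<longleftrightarrow> (\<forall>k<m. f k \<in> {1, -1, \<i>, -\<i>})"

definition OQS :: "nat \<Rightarrow> (nat \<Rightarrow> complex) \<Rightarrow> bool" where
  "OQS m f \<longleftrightarrow> odd m \<and> quaternary_seq m f \<and>
     (\<forall>w. 1 \<le> w \<and> w \<le> m - 1 \<longrightarrow> cmod (autocorr m f w) = 1)"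

definition binary_seq :: "nat \<Rightarrow> (nat \<Rightarrow> int) \<Rightarrow> bool" where
  "binary_seq n \<phi> \<longleftrightarrow> (\<forall>x<n. \<phi> x \<in> {1, -1})"

definition expansion :: "nat \<Rightarrow> (nat \<Rightarrow> int) \<Rightarrow> nat \<Rightarrow> int" where
  "expansion m \<phi> x = (if x mod (4*m) < 2*m then \<phi> (x mod (4*m) mod (2*m))
                        else - \<phi> (x mod (4*m) mod (2*m)))"

definition GOBS :: "nat \<Rightarrow> (nat \<Rightarrow> int) \<Rightarrow> bool" where
  "GOBS m \<phi> \<longleftrightarrow> binary_seq (2*m) \<phi> \<and>
     (let R = autocorr (4*m) (\<lambda>x. of_int (expansion m \<phi> x)) in
       (\<forall>x<4*m. x \<noteq> 0 \<and> x \<noteq> 2*m \<longrightarrow> R x \<in> {0, 4, -4}) \<and>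
       card {x. x < 4*m \<and> R x = 0} = 2*m)"

definition arr :: "nat \<Rightarrow> (nat \<Rightarrow> int) \<Rightarrow> nat \<Rightarrow> nat \<Rightarrow> int" where
  "arr m \<phi> a k =
    (let p = (\<lambda>x. \<phi> (x mod (2*m))); u = p (k + a*m); v = p (k + (1-a)*m) in
     if m mod 4 = 1 then
       (if k mod 4 = 0 then u
        else if k mod 4 = 1 then (-1) ^ (1-a) * v
        else if k mod 4 = 2 then - u
        else (-1) ^ a * v)
     else
       (if k mod 4 = 0 then (-1) ^ a * u
        else if k mod 4 = 1 then v
        else if k mod 4 = 2 then (-1) ^ (1-a) * u
        else - v))"

definition quat_of :: "nat \<Rightarrow> (nat \<Rightarrow> int) \<Rightarrow> nat \<Rightarrow> complex" where
  "quat_of m \<phi> k = (1 - \<i>) / 2 * (of_int (arr m \<phi> 0 k) + \<i> * of_int (arr m \<phi> 1 k))"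

end

theory Submission
  imports Defs "HOL-Number_Theory.Cong"
begin

text \<open>
  Since \<open>m\<close> is odd, \<open>y \<mapsto> (y mod 4, y mod m)\<close> identifies \<open>\<int>\<^sub>4\<^sub>m\<close> with
  \<open>\<int>\<^sub>4 \<times> \<int>\<^sub>m\<close>, and under this identification the expansion \<open>\<phi>'\<close> becomes
  \<open>(t, k) \<mapsto> (-1)\<^bsup>\<lfloor>t/2\<rfloor>\<^esup> \<phi>(t mod 2, k)\<close>; the case split defining the array
  \<open>\<phi>(a, k)\<close> is exactly what makes this true. Summing over \<open>t\<close> shows that
  \<open>R\<^sub>\<phi>\<^sub>'(x) = \<plusminus>2 S(x mod m)\<close> for even \<open>x\<close> and \<open>\<plusminus>2 D(x mod m)\<close> for odd \<open>x\<close>, where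
  \<open>S\<close> is the sum of the periodic autocorrelations of the two rows and \<open>D\<close> the
  difference of their two cross-correlations; on the other side \<open>2 R\<^sub>f(w) = S(w) - i D(w)\<close>.
  For \<open>\<plusminus>1\<close> rows, \<open>S \<equiv> 2\<close> and \<open>D \<equiv> 0 (mod 4)\<close>, so both \<open>|R\<^sub>f(w)| = 1\<close> and the
  GOBS conditions are equivalent to \<open>|S(w)| = 2 \<and> D(w) = 0\<close> for \<open>0 < w < m\<close>; in the
  GOBS case the zeros of \<open>R\<^sub>\<phi>\<^sub>'\<close> are then exactly the \<open>2m\<close> odd shifts.
\<close>

lemma bij_betw_mod_pair:
  fixes a b :: nat
  assumes "coprime a b"
  shows "bij_betw (\<lambda>y. (y mod a, y mod b)) {..<a * b} ({..<a} \<times> {..<b})"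
proof -
  have inj: "inj_on (\<lambda>y. (y mod a, y mod b)) {..<a * b}"
  proof (rule inj_onI)
    fix y z assume "y \<in> {..<a * b}" "z \<in> {..<a * b}" "(y mod a, y mod b) = (z mod a, z mod b)"
    then have "[y = z] (mod a)" "[y = z] (mod b)" "y < a * b" "z < a * b"
      by (simp_all add: cong_def)
    then show "y = z"
      by (intro cong_less_modulus_unique_nat[OF coprime_cong_mult_nat[OF _ _ assms]])
  qed
  have "(\<lambda>y. (y mod a, y mod b)) ` {..<a * b} \<subseteq> {..<a} \<times> {..<b}"
    by (auto intro!: mod_less_divisor) (auto intro!: Nat.gr0I)
  then have "(\<lambda>y. (y mod a, y mod b)) ` {..<a * b} = {..<a} \<times> {..<b}"
    by (rule card_subset_eq[rotated]) (simp_all add: card_image[OF inj] card_cartesian_product)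
  with inj show ?thesis
    by (simp add: bij_betw_def)
qed

lemma exists_mod_pair:
  fixes a b :: nat
  assumes "coprime a b" and "t < a" and "k < b"
  shows "\<exists>y<a * b. y mod a = t \<and> y mod b = k"
proof -
  have "(t, k) \<in> (\<lambda>y. (y mod a, y mod b)) ` {..<a * b}"
    using bij_betw_imp_surj_on[OF bij_betw_mod_pair[OF assms(1)]] assms(2,3) by simp
  then show ?thesis
    by force
qed

lemma sum_mod_pair:
  fixes a b :: nat
  assumes "coprime a b"
  shows "(\<Sum>y<a * b. g (y mod a) (y mod b)) = (\<Sum>t<a. \<Sum>k<b. g t k)"
  using sum.reindex_bij_betw[OF bij_betw_mod_pair[OF assms], of "case_prod g"]
  by (simp add: sum.cartesian_product)

lemma coprime_4_odd: "odd m \<Longrightarrow> coprime (4::nat) m"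
  using coprime_power_left_iff[of "2::nat" 2 m] by simp

lemma sum_rotate_mod:
  fixes m :: nat
  shows "(\<Sum>k<m. g ((w + k) mod m)) = (\<Sum>k<m. g k)"
proof (cases "m = 0")
  case False
  have "inj_on (\<lambda>k. (w + k) mod m) {..<m}"
    by (rule inj_onI) (simp flip: cong_def add: cong_add_lcancel_nat cong_less_imp_eq_nat)
  then have "bij_betw (\<lambda>k. (w + k) mod m) {..<m} {..<m}"
    using False by (simp add: bij_betw_def endo_inj_surj image_subset_iff)
  then show ?thesis by (rule sum.reindex_bij_betw)
qed simp

lemma sum_lessThan_4: "(\<Sum>t<(4::nat). g t) = g 0 + g 1 + g 2 + (g 3 :: 'a::comm_monoid_add)"
  by (simp add: eval_nat_numeral add.assoc)

lemma card_odd_below: "card {x. x < 2 * n \<and> odd x} = n"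
proof -
  have "{x. x < 2 * n \<and> odd x} = (\<lambda>i. 2 * i + 1) ` {..<n}"
    by (auto simp: image_iff elim!: oddE)
  then show ?thesis by (simp add: card_image inj_on_def)
qed

lemma even_multiple_of_odd_below:
  fixes m x :: nat
  assumes "odd m" and "even x" and "m dvd x" and "x < 4 * m"
  shows "x = 0 \<or> x = 2 * m"
proof -
  have "2 * m dvd x"
    using assms(1-3) by (simp add: divides_mult)
  then obtain q where q: "x = 2 * m * q" ..
  with assms(4) have "q < 2"
    by simp
  then show ?thesis
    using q by (auto simp: less_2_cases_iff)
qed

lemma pm1_mult_cong: "a \<in> {1, -1} \<Longrightarrow> b \<in> {1, -1} \<Longrightarrow> [a * b = a + b - 1] (mod 4)"
  for a b :: int
  by (auto simp: cong_def)

lemma sum_pm1_cong: "\<forall>k<m. u k \<in> {1, -1} \<Longrightarrow> [sum u {..<m} = int m] (mod 2)"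
proof -
  assume "\<forall>k<m. u k \<in> {1, -1}"
  then have "[sum u {..<m} = (\<Sum>k<m. 1)] (mod 2)"
    by (intro cong_sum) (auto simp: cong_def)
  then show ?thesis by simp
qed

definition cross_corr :: "nat \<Rightarrow> (nat \<Rightarrow> int) \<Rightarrow> (nat \<Rightarrow> int) \<Rightarrow> nat \<Rightarrow> int" where
  "cross_corr m u v w = (\<Sum>k<m. u k * v ((w + k) mod m))"

lemma cross_corr_0_commute: "cross_corr m u v 0 = cross_corr m v u 0"
  unfolding cross_corr_def by (rule sum.cong) (simp_all add: mult.commute)

lemma cross_corr_pm1_cong:
  assumes "\<forall>k<m. u k \<in> {1, -1}" and "\<forall>k<m. v k \<in> {1, -1}"
  shows "[cross_corr m u v w = sum u {..<m} + sum v {..<m} - int m] (mod 4)"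
proof -
  have "[cross_corr m u v w = (\<Sum>k<m. u k + v ((w + k) mod m) - 1)] (mod 4)"
    unfolding cross_corr_def using assms by (intro cong_sum pm1_mult_cong) auto
  also have "(\<Sum>k<m. u k + v ((w + k) mod m) - 1) = sum u {..<m} + sum v {..<m} - int m"
    by (simp add: sum.distrib sum_subtractf sum_rotate_mod[of v])
  finally show ?thesis .
qed

lemma arr_pm1:
  assumes "binary_seq (2 * m) \<phi>" and "k < m"
  shows "arr m \<phi> a k \<in> {1, -1}"
proof -
  have "\<phi> (x mod (2 * m)) \<in> {1, -1}" for x
    using assms unfolding binary_seq_def by simp
  moreover have "(-1::int) ^ n \<in> {1, -1}" for n :: nat
    by (cases "even n") auto
  moreover have "x * y \<in> {1, -1}" if "x \<in> {1, -1}" "y \<in> {1, -1}" for x y :: int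
    using that by auto
  moreover have "- x \<in> {1, -1}" if "x \<in> {1, -1}" for x :: int
    using that by auto
  ultimately show ?thesis
    unfolding arr_def Let_def by (simp del: insert_iff)
qed

definition row_autocorr_sum :: "nat \<Rightarrow> (nat \<Rightarrow> int) \<Rightarrow> nat \<Rightarrow> int" where
  "row_autocorr_sum m \<phi> w =
     cross_corr m (arr m \<phi> 0) (arr m \<phi> 0) w + cross_corr m (arr m \<phi> 1) (arr m \<phi> 1) w"

definition row_crosscorr_diff :: "nat \<Rightarrow> (nat \<Rightarrow> int) \<Rightarrow> nat \<Rightarrow> int" where
  "row_crosscorr_diff m \<phi> w =
     cross_corr m (arr m \<phi> 0) (arr m \<phi> 1) w - cross_corr m (arr m \<phi> 1) (arr m \<phi> 0) w"

lemma row_autocorr_sum_cong: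
  assumes "binary_seq (2 * m) \<phi>" and "odd m"
  shows "[row_autocorr_sum m \<phi> w = 2] (mod 4)"
proof -
  let ?A = "arr m \<phi> 0" and ?B = "arr m \<phi> 1"
  have pm1: "\<forall>k<m. arr m \<phi> a k \<in> {1, -1}" for a
    using arr_pm1[OF assms(1)] by blast
  have parity: "[(s0 + s0 - n) + (s1 + s1 - n) = 2] (mod 4)"
    if "[s0 = n] (mod 2)" and "[s1 = n] (mod 2)" and "odd n" for s0 s1 n :: int
    using that unfolding cong_iff_dvd_diff by (elim dvdE oddE) (simp add: algebra_simps)
  have decomp: "[row_autocorr_sum m \<phi> w
      = (sum ?A {..<m} + sum ?A {..<m} - int m) + (sum ?B {..<m} + sum ?B {..<m} - int m)] (mod 4)"
    unfolding row_autocorr_sum_def by (intro cong_add cross_corr_pm1_cong pm1)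
  have "odd (int m)"
    using assms(2) by simp
  with decomp show ?thesis
    using parity[OF sum_pm1_cong[OF pm1] sum_pm1_cong[OF pm1]] cong_trans by blast
qed

lemma row_crosscorr_diff_cong:
  assumes "binary_seq (2 * m) \<phi>"
  shows "[row_crosscorr_diff m \<phi> w = 0] (mod 4)"
proof -
  have pm1: "\<forall>k<m. arr m \<phi> a k \<in> {1, -1}" for a
    using arr_pm1[OF assms] by blast
  show ?thesis
    using cong_diff[OF cross_corr_pm1_cong[OF pm1 pm1, of 0 1 w] cross_corr_pm1_cong[OF pm1 pm1, of 1 0 w]]
    unfolding row_crosscorr_diff_def by (simp add: add.commute)
qed

lemma row_crosscorr_diff_0: "row_crosscorr_diff m \<phi> 0 = 0"
  unfolding row_crosscorr_diff_def by (simp add: cross_corr_0_commute)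

lemma quat_pm1_mem:
  fixes a b :: int
  assumes "a \<in> {1, -1}" and "b \<in> {1, -1}"
  shows "(1 - \<i>) / 2 * (of_int a + \<i> * of_int b) \<in> {1, -1, \<i>, -\<i>}"
  using assms by (auto simp: complex_eq_iff)

lemma quat_mult_cnj:
  fixes a b c d :: int
  shows "(1 - \<i>) / 2 * (of_int a + \<i> * of_int b) * cnj ((1 - \<i>) / 2 * (of_int c + \<i> * of_int d))
    = (of_int (a * c + b * d) - \<i> * of_int (a * d - b * c)) / 2"
  by (simp add: complex_eq_iff algebra_simps; simp add: field_simps)

lemma autocorr_quat_of:
  "autocorr m (quat_of m \<phi>) w
     = (of_int (row_autocorr_sum m \<phi> w) - \<i> * of_int (row_crosscorr_diff m \<phi> w)) / 2"
proof -
  let ?A = "arr m \<phi> 0" and ?B = "arr m \<phi> 1" and ?s = "\<lambda>k. (w + k) mod m"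
  let ?P = "\<lambda>k. ?A k * ?A (?s k) + ?B k * ?B (?s k)"
  let ?Q = "\<lambda>k. ?A k * ?B (?s k) - ?B k * ?A (?s k)"
  have P: "(\<Sum>k<m. ?P k) = row_autocorr_sum m \<phi> w"
    unfolding row_autocorr_sum_def cross_corr_def by (rule sum.distrib)
  have Q: "(\<Sum>k<m. ?Q k) = row_crosscorr_diff m \<phi> w"
    unfolding row_crosscorr_diff_def cross_corr_def by (rule sum_subtractf)
  have "autocorr m (quat_of m \<phi>) w = (\<Sum>k<m. (of_int (?P k) - \<i> * of_int (?Q k)) / 2)"
    unfolding autocorr_def quat_of_def quat_mult_cnj by (simp add: add.commute)
  also have "\<dots> = ((\<Sum>k<m. of_int (?P k)) - \<i> * (\<Sum>k<m. of_int (?Q k))) / 2"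
    by (simp only: sum_divide_distrib[symmetric] sum_subtractf sum_distrib_left)
  finally show ?thesis
    by (simp only: of_int_sum[symmetric] P Q)
qed

lemma cmod_half_eq_1_iff: "cmod ((of_int a - \<i> * of_int b) / 2) = 1 \<longleftrightarrow> a\<^sup>2 + b\<^sup>2 = (4::int)"
proof -
  have "cmod ((of_int a - \<i> * of_int b) / 2) = sqrt ((real_of_int a / 2)\<^sup>2 + (real_of_int b / 2)\<^sup>2)"
    by (simp add: cmod_def)
  then have "cmod ((of_int a - \<i> * of_int b) / 2) = 1 \<longleftrightarrow> real_of_int (a\<^sup>2 + b\<^sup>2) = 4"
    by (simp add: power_divide field_simps)
  then show ?thesis
    by (simp only: of_int_eq_numeral_iff)
qed

lemma sum_sq_eq_4_iff:
  fixes a b :: int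
  assumes "[a = 2] (mod 4)" and "[b = 0] (mod 4)"
  shows "a\<^sup>2 + b\<^sup>2 = 4 \<longleftrightarrow> \<bar>a\<bar> = 2 \<and> b = 0"
proof
  assume sq: "a\<^sup>2 + b\<^sup>2 = 4"
  have "b\<^sup>2 < 16"
    using sq zero_le_power2[of a] by linarith
  then have "\<bar>b\<bar> < 4"
    using abs_le_square_iff[of 4 b] by (simp add: not_le)
  with assms(2) have "b = 0"
    unfolding cong_def by presburger
  moreover from this sq have "\<bar>a\<bar> = 2"
    using power2_eq_iff_nonneg[of "\<bar>a\<bar>" 2] by simp
  ultimately show "\<bar>a\<bar> = 2 \<and> b = 0"
    by simp
next
  assume "\<bar>a\<bar> = 2 \<and> b = 0"
  then show "a\<^sup>2 + b\<^sup>2 = 4"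
    using power2_abs[of a] by simp
qed

lemma OQS_quat_of_iff:
  assumes "binary_seq (2 * m) \<phi>" and "odd m"
  shows "OQS m (quat_of m \<phi>) \<longleftrightarrow>
    (\<forall>w\<in>{1..<m}. \<bar>row_autocorr_sum m \<phi> w\<bar> = 2 \<and> row_crosscorr_diff m \<phi> w = 0)"
proof -
  have "quaternary_seq m (quat_of m \<phi>)"
    unfolding quaternary_seq_def quat_of_def using quat_pm1_mem arr_pm1[OF assms(1)] by blast
  moreover have "m > 0"
    using assms(2) by (auto intro: Nat.gr0I)
  ultimately show ?thesis
    unfolding OQS_def autocorr_quat_of cmod_half_eq_1_iff
    using sum_sq_eq_4_iff[OF row_autocorr_sum_cong[OF assms] row_crosscorr_diff_cong[OF assms(1)]] assms(2)
    by (auto simp: Ball_def)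
qed

definition signed_row :: "nat \<Rightarrow> (nat \<Rightarrow> int) \<Rightarrow> nat \<Rightarrow> nat \<Rightarrow> int" where
  "signed_row m \<phi> t k = (-1) ^ (t div 2) * arr m \<phi> (t mod 2) k"

lemma expansion_block:
  assumes "k < m" and "j < 4"
  shows "expansion m \<phi> (k + j * m) = (-1) ^ (j div 2) * \<phi> (k + j mod 2 * m)"
proof -
  have "j = 0 \<or> j = 1 \<or> j = 2 \<or> j = 3"
    using assms(2) by auto
  moreover have "(k + 2 * m) mod (4 * m) = k + 2 * m" "(k + 3 * m) mod (4 * m) = k + 3 * m"
    "(k + 2 * m) mod (2 * m) = k" "(k + 3 * m) mod (2 * m) = k + m"
    using assms(1) by (simp_all add: mod_if)
  ultimately show ?thesis
    using assms(1) unfolding expansion_def by auto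
qed

lemma expansion_eq_signed_row:
  assumes "odd m" and "y < 4 * m"
  shows "expansion m \<phi> y = signed_row m \<phi> (y mod 4) (y mod m)"
proof -
  define k j where "k = y mod m" and "j = y div m"
  have y: "y = k + j * m" and k: "k < m" and j: "j < 4"
    using assms by (auto simp: k_def j_def less_mult_imp_div_less intro: Nat.gr0I)
  have y4: "y mod 4 = (k mod 4 + j * (m mod 4)) mod 4"
    unfolding y by (metis mod_add_left_eq mod_add_right_eq mod_mult_right_eq)
  have "(k + 0 * m) mod (2 * m) = k" "(k + 1 * m) mod (2 * m) = k + m"
    using k by simp_all
  moreover have "m mod 4 = 1 \<or> m mod 4 = 3" "k mod 4 = 0 \<or> k mod 4 = 1 \<or> k mod 4 = 2 \<or> k mod 4 = 3"
    "j = 0 \<or> j = 1 \<or> j = 2 \<or> j = 3"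
    using assms(1) j by presburger+
  ultimately show ?thesis
    unfolding expansion_block[OF k j, folded y] y4 k_def[symmetric] signed_row_def arr_def Let_def
    by (elim disjE) simp_all
qed

lemma signed_row_shift_sum:
  assumes "c < 4"
  shows "(\<Sum>t<4. signed_row m \<phi> t k * signed_row m \<phi> ((c + t) mod 4) l)
    = (-1) ^ (c div 2) * 2 *
      (if even c then arr m \<phi> 0 k * arr m \<phi> 0 l + arr m \<phi> 1 k * arr m \<phi> 1 l
       else arr m \<phi> 0 k * arr m \<phi> 1 l - arr m \<phi> 1 k * arr m \<phi> 0 l)"
proof -
  have "c = 0 \<or> c = 1 \<or> c = 2 \<or> c = 3"
    using assms by auto
  then show ?thesis
    by (elim disjE) (simp_all add: sum_lessThan_4 signed_row_def algebra_simps)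
qed

lemma expansion_corr_eq:
  assumes "odd m"
  shows "(\<Sum>y<4 * m. expansion m \<phi> y * expansion m \<phi> ((x + y) mod (4 * m)))
    = (-1) ^ (x mod 4 div 2) * 2 *
      (if even x then row_autocorr_sum m \<phi> (x mod m) else row_crosscorr_diff m \<phi> (x mod m))"
proof -
  let ?E = "signed_row m \<phi>"
  have m: "m > 0"
    using assms by (auto intro: Nat.gr0I)
  have even_mod_4_iff: "even (x mod 4) \<longleftrightarrow> even x"
    by presburger
  have "(\<Sum>y<4 * m. expansion m \<phi> y * expansion m \<phi> ((x + y) mod (4 * m)))
      = (\<Sum>y<4 * m. ?E (y mod 4) (y mod m) * ?E ((x mod 4 + y mod 4) mod 4) ((x + y mod m) mod m))"
  proof (rule sum.cong)
    fix y assume "y \<in> {..<4 * m}"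
    moreover have "(x + y) mod (4 * m) mod 4 = (x mod 4 + y mod 4) mod 4"
      by (simp add: mod_mod_cancel mod_add_eq)
    moreover have "(x + y) mod (4 * m) mod m = (x + y mod m) mod m"
      by (simp add: mod_mod_cancel mod_add_right_eq)
    ultimately show "expansion m \<phi> y * expansion m \<phi> ((x + y) mod (4 * m))
        = ?E (y mod 4) (y mod m) * ?E ((x mod 4 + y mod 4) mod 4) ((x + y mod m) mod m)"
      using m by (simp add: expansion_eq_signed_row[OF assms])
  qed simp
  also have "\<dots> = (\<Sum>t<4. \<Sum>k<m. ?E t k * ?E ((x mod 4 + t) mod 4) ((x + k) mod m))"
    by (rule sum_mod_pair[OF coprime_4_odd[OF assms],
          where g = "\<lambda>t k. ?E t k * ?E ((x mod 4 + t) mod 4) ((x + k) mod m)"])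
  also have "\<dots> = (\<Sum>k<m. \<Sum>t<4. ?E t k * ?E ((x mod 4 + t) mod 4) ((x + k) mod m))"
    by (rule sum.swap)
  also have "\<dots> = (\<Sum>k<m. (-1) ^ (x mod 4 div 2) * 2 *
      (if even x then arr m \<phi> 0 k * arr m \<phi> 0 ((x + k) mod m) + arr m \<phi> 1 k * arr m \<phi> 1 ((x + k) mod m)
       else arr m \<phi> 0 k * arr m \<phi> 1 ((x + k) mod m) - arr m \<phi> 1 k * arr m \<phi> 0 ((x + k) mod m)))"
    using signed_row_shift_sum[of "x mod 4"] by (simp add: mod_add_left_eq even_mod_4_iff)
  also have "\<dots> = (-1) ^ (x mod 4 div 2) * 2 *
      (if even x then row_autocorr_sum m \<phi> (x mod m) else row_crosscorr_diff m \<phi> (x mod m))"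
    unfolding row_autocorr_sum_def row_crosscorr_diff_def cross_corr_def
    by (cases "even x") (simp_all add: sum_distrib_left[symmetric] sum.distrib sum_subtractf mod_add_left_eq)
  finally show ?thesis .
qed

lemma of_int_eq_neg_numeral_iff: "(of_int z :: 'a::ring_char_0) = - numeral n \<longleftrightarrow> z = - numeral n"
  by (metis of_int_eq_iff of_int_minus of_int_numeral)

lemma autocorr_expansion:
  assumes "odd m"
  shows "autocorr (4 * m) (\<lambda>y. of_int (expansion m \<phi> y)) x
    = of_int ((-1) ^ (x mod 4 div 2) * 2 *
        (if even x then row_autocorr_sum m \<phi> (x mod m) else row_crosscorr_diff m \<phi> (x mod m)))"
  unfolding autocorr_def expansion_corr_eq[OF assms, symmetric] by simp

lemma GOBS_imp_row_corr:
  assumes "binary_seq (2 * m) \<phi>" and "odd m" and "GOBS m \<phi>"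
  shows "\<forall>w\<in>{1..<m}. \<bar>row_autocorr_sum m \<phi> w\<bar> = 2 \<and> row_crosscorr_diff m \<phi> w = 0"
proof
  fix w assume w: "w \<in> {1..<m}"
  let ?R = "autocorr (4 * m) (\<lambda>y. of_int (expansion m \<phi> y))"
  have R: "?R x \<in> {0, 4, -4}" if "x < 4 * m" and "x mod m = w" for x
  proof -
    have "x mod m \<noteq> 0"
      using that(2) w by simp
    then have "x \<noteq> 0" and "x \<noteq> 2 * m"
      by (intro notI, simp)+
    with assms(3) that(1) show ?thesis
      unfolding GOBS_def Let_def by blast
  qed
  obtain x0 where x0: "x0 < 4 * m" "x0 mod 4 = 0" "x0 mod m = w"
    using exists_mod_pair[OF coprime_4_odd[OF assms(2)], of 0 w] w by auto
  obtain x1 where x1: "x1 < 4 * m" "x1 mod 4 = 1" "x1 mod m = w"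
    using exists_mod_pair[OF coprime_4_odd[OF assms(2)], of 1 w] w by auto
  have "even x0" "odd x1"
    using x0(2) x1(2) by presburger+
  then have "2 * row_autocorr_sum m \<phi> w \<in> {0, 4, -4}" "2 * row_crosscorr_diff m \<phi> w \<in> {0, 4, -4}"
    using R[OF x0(1,3)] R[OF x1(1,3)] x0(2,3) x1(2,3)
    by (simp_all add: autocorr_expansion[OF assms(2)] of_int_eq_neg_numeral_iff)
  then show "\<bar>row_autocorr_sum m \<phi> w\<bar> = 2 \<and> row_crosscorr_diff m \<phi> w = 0"
    using row_autocorr_sum_cong[OF assms(1,2), of w] row_crosscorr_diff_cong[OF assms(1), of w]
    unfolding cong_def by auto
qed

lemma row_corr_imp_GOBS:
  assumes "binary_seq (2 * m) \<phi>" and "odd m"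
    and corr: "\<forall>w\<in>{1..<m}. \<bar>row_autocorr_sum m \<phi> w\<bar> = 2 \<and> row_crosscorr_diff m \<phi> w = 0"
  shows "GOBS m \<phi>"
proof -
  let ?R = "autocorr (4 * m) (\<lambda>y. of_int (expansion m \<phi> y))"
  have "m > 0"
    using assms(2) by (auto intro: Nat.gr0I)
  then have diff_0: "row_crosscorr_diff m \<phi> (x mod m) = 0" for x
    using corr row_crosscorr_diff_0[of m \<phi>] by (cases "x mod m = 0") auto
  have sum_nonzero: "row_autocorr_sum m \<phi> w \<noteq> 0" for w
    using row_autocorr_sum_cong[OF assms(1,2), of w] unfolding cong_def by (intro notI) simp
  have zero_iff: "?R x = 0 \<longleftrightarrow> odd x" for x
    using diff_0[of x] sum_nonzero[of "x mod m"]
    by (cases "even x") (simp_all add: autocorr_expansion[OF assms(2)])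
  have "?R x \<in> {0, 4, -4}" if "x < 4 * m" and "x \<noteq> 0" and "x \<noteq> 2 * m" for x
  proof (cases "even x")
    case True
    then have "\<not> m dvd x"
      using even_multiple_of_odd_below[OF assms(2) True _ that(1)] that(2,3) by blast
    with \<open>m > 0\<close> have "x mod m \<in> {1..<m}"
      by (simp add: dvd_eq_mod_eq_0)
    with corr have "\<bar>row_autocorr_sum m \<phi> (x mod m)\<bar> = 2"
      by blast
    define s where "s = (-1::int) ^ (x mod 4 div 2)"
    have "s \<in> {1, -1}"
      unfolding s_def by (cases "even (x mod 4 div 2)") auto
    moreover have "row_autocorr_sum m \<phi> (x mod m) \<in> {2, -2}"
      using \<open>\<bar>row_autocorr_sum m \<phi> (x mod m)\<bar> = 2\<close> by auto
    moreover have "?R x = of_int (s * 2 * row_autocorr_sum m \<phi> (x mod m))"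
      using True unfolding s_def by (simp only: autocorr_expansion[OF assms(2)] if_True)
    ultimately show ?thesis
      by auto
  qed (simp add: zero_iff)
  moreover have "{x. x < 4 * m \<and> ?R x = 0} = {x. x < 2 * (2 * m) \<and> odd x}"
    by (auto simp: zero_iff)
  ultimately show ?thesis
    unfolding GOBS_def Let_def using assms(1) card_odd_below[of "2 * m"] by auto
qed

theorem corollary1:
  fixes m :: nat and \<phi> :: "nat \<Rightarrow> int"
  assumes "m > 1" and "odd m" and "binary_seq (2*m) \<phi>"
  shows "OQS m (quat_of m \<phi>) \<longleftrightarrow> GOBS m \<phi>"
  using OQS_quat_of_iff[OF assms(3,2)] GOBS_imp_row_corr[OF assms(3,2)] row_corr_imp_GOBS[OF assms(3,2)]
  by blast

end
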